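(* Let $\mathbb{K}$ be a field of characteristic zero and let $\mathbb{K}(x)[S_x]$ be the ring of linear recurrence operators, in which $S_x\, a(x) = a(x+1)\, S_x$ for $a\in\mathbb{K}(x)$. Let $m$ be a positive integer and let $L\in\mathbb{K}(x)[S_x]$ be nonzero, with $m$-exponent separation $L=L_0+L_1+\cdots+L_{m-1}$, where $L_i=\sum_{j=0}^{r_i}\ell_{i,j}S_x^{jm+i}$ with $\ell_{i,j}\in\mathbb{K}(x)$. Let $\mathcal{L}_m$ be the $m\times m$ matrix over $\mathbb{K}(x)[S_x]$ whose entry in row $i$ and column $j$ ($0\le i,j\le m-1$) is $L_{(i-j)\bmod m}$. Then there exist a matrix $\mathcal{M}\in\mathbb{K}(x)[S_x]^{m\times m}$ and nonzero operators $T_0,\ldots,T_{m-1}\in\mathbb{K}(x)[S_x]$ such that $\mathcal{M}\cdot\mathcal{L}_m=\mathrm{diag}(T_0,T_1,\ldots,T_{m-1})$.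
   Context: Matrix products are computed in the noncommutative ring $\mathbb{K}(x)[S_x]$: the $(i,j)$ entry of $\mathcal{M}\cdot\mathcal{L}_m$ is $\sum_k \mathcal{M}_{i,k}(\mathcal{L}_m)_{k,j}$. *)

theory Defs
  imports "HOL-Computational_Algebra.Polynomial" "HOL-Computational_Algebra.Fraction_Field"
begin

text \<open>The rational function field K(x) is modelled as 'a poly fract.
  The shift automorphism a(x) to a(x+1), defined on representatives.\<close>
definition ratshift :: "'a::field_char_0 poly fract \<Rightarrow> 'a poly fract" where
  "ratshift r = (SOME s. \<forall>a b. b \<noteq> 0 \<longrightarrow> r = Fract a b \<longrightarrow>
      s = Fract (pcompose a [:1, 1:]) (pcompose b [:1, 1:]))"

text \<open>Recurrence operators K(x)[S_x] are represented as polynomials in S_x with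
  coefficients (on the left) in K(x): the operator sum_k c_k S_x^k is the poly with
  coeff k = c_k.  Addition is polynomial addition; multiplication is the Ore product
  determined by S_x a(x) = a(x+1) S_x.\<close>
type_synonym 'a recop = "'a poly fract poly"

definition ore_mult :: "'a::field_char_0 recop \<Rightarrow> 'a recop \<Rightarrow> 'a recop" where
  "ore_mult P Q = (\<Sum>i\<le>degree P. \<Sum>j\<le>degree Q.
      monom (coeff P i * (ratshift ^^ i) (coeff Q j)) (i + j))"

definition exp_part :: "nat \<Rightarrow> nat \<Rightarrow> 'a::field_char_0 recop \<Rightarrow> 'a recop" where
  "exp_part m i L = (\<Sum>k\<le>degree L. if k mod m = i then monom (coeff L k) k else 0)"

definition sep_matrix :: "nat \<Rightarrow> 'a::field_char_0 recop \<Rightarrow> nat \<Rightarrow> nat \<Rightarrow> 'a recop" where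
  "sep_matrix m L i j = exp_part m (nat ((int i - int j) mod int m)) L"

end

theory Submission
  imports Defs
begin

text \<open>Choose a nonzero left multiplier \<open>P\<close> such that \<open>P L\<close> involves only powers of \<open>S\<^sub>x\<^sup>m\<close>:
  with \<open>deg P \<le> (m - 1) deg L\<close>, the vanishing of the coefficients of \<open>P L\<close> at the \<open>(m - 1) deg L\<close>
  exponents up to \<open>m deg L\<close> that are not multiples of \<open>m\<close> is a homogeneous linear system over
  \<open>K(x)\<close> with one more unknown than equations. The \<open>m\<close>-exponent separation is compatible with
  multiplication because exponents add: the part of \<open>P L\<close> of residue \<open>r\<close> is the sum of the products
  \<open>P\<^sub>a L\<^sub>b\<close> with \<open>a + b \<equiv> r\<close>. So if the \<open>(i, k)\<close> entry of \<open>\<M>\<close> is the part of \<open>P\<close> of residue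
  \<open>i - k\<close>, the \<open>(i, j)\<close> entry of \<open>\<M> \<L>\<^sub>m\<close> is the part of \<open>P L\<close> of residue \<open>i - j\<close>, which is \<open>P L\<close>
  on the diagonal and \<open>0\<close> off it; and \<open>P L \<noteq> 0\<close> because leading coefficients multiply.\<close>

definition supported_on_multiples :: "nat \<Rightarrow> 'a::zero poly \<Rightarrow> bool" where
  "supported_on_multiples m Q \<longleftrightarrow> (\<forall>n. coeff Q n \<noteq> 0 \<longrightarrow> m dvd n)"

lemma ratshift_Fract:
  fixes a b :: "'a::field_char_0 poly"
  assumes b: "b \<noteq> 0"
  shows "ratshift (Fract a b) = Fract (pcompose a [:1, 1:]) (pcompose b [:1, 1:])"
proof -
  let ?q = "[:1, 1:] :: 'a poly"
  have nonzero: "pcompose c ?q \<noteq> 0" if "c \<noteq> 0" for c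
    using that pcompose_eq_0_iff[of ?q c] by simp
  have "\<forall>c d. d \<noteq> 0 \<longrightarrow> Fract a b = Fract c d \<longrightarrow>
      Fract (pcompose a ?q) (pcompose b ?q) = Fract (pcompose c ?q) (pcompose d ?q)"
  proof (intro allI impI)
    fix c d :: "'a poly" assume d: "d \<noteq> 0" and "Fract a b = Fract c d"
    then have "a * d = c * b" using eq_fract(1)[OF b d] by simp
    then have "pcompose a ?q * pcompose d ?q = pcompose c ?q * pcompose b ?q"
      by (metis pcompose_mult)
    then show "Fract (pcompose a ?q) (pcompose b ?q) = Fract (pcompose c ?q) (pcompose d ?q)"
      using nonzero b d by (simp add: eq_fract(1))
  qed
  then have "\<forall>c d. d \<noteq> 0 \<longrightarrow> Fract a b = Fract c d \<longrightarrow>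
      ratshift (Fract a b) = Fract (pcompose c ?q) (pcompose d ?q)"
    unfolding ratshift_def by (rule someI)
  then show ?thesis using b by blast
qed

lemma ratshift_eq_0_iff [simp]: "ratshift x = 0 \<longleftrightarrow> (x :: 'a::field_char_0 poly fract) = 0"
proof (cases x)
  case (Fract a b)
  have "Fract c d = 0 \<longleftrightarrow> c = 0" if "d \<noteq> 0" for c d :: "'a poly"
    using eq_fract(1)[OF that one_neq_zero, of c 0] by (simp add: Zero_fract_def)
  moreover have "pcompose c [:1, 1:] = 0 \<longleftrightarrow> c = 0" for c :: "'a poly"
    by (simp add: pcompose_eq_0_iff)
  ultimately show ?thesis using Fract by (simp add: ratshift_Fract)
qed

lemma funpow_ratshift_eq_0_iff [simp]:
  "(ratshift ^^ n) x = 0 \<longleftrightarrow> (x :: 'a::field_char_0 poly fract) = 0"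
  by (induction n) simp_all

lemma funpow_ratshift_0 [simp]: "(ratshift ^^ n) (0 :: 'a::field_char_0 poly fract) = 0"
  by simp

lemma coeff_ore_mult:
  "coeff (ore_mult P Q) n = (\<Sum>a\<le>n. coeff P a * (ratshift ^^ a) (coeff Q (n - a)))"
proof -
  define f where "f a = coeff P a * (ratshift ^^ a) (coeff Q (n - a))" for a
  have inner: "(\<Sum>j\<le>degree Q. if i + j = n then coeff P i * (ratshift ^^ i) (coeff Q j) else 0)
      = (if i \<le> n then f i else 0)" for i
  proof (cases "i \<le> n \<and> n - i \<le> degree Q")
    case True
    then have "(\<Sum>j\<le>degree Q. if i + j = n then coeff P i * (ratshift ^^ i) (coeff Q j) else 0)
       = (\<Sum>j\<le>degree Q. if j = n - i then coeff P i * (ratshift ^^ i) (coeff Q j) else 0)"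
      by (intro sum.cong) auto
    with True show ?thesis by (simp add: f_def)
  next
    case False
    then show ?thesis
      by (auto simp: f_def coeff_eq_0 intro!: sum.neutral)
  qed
  have "coeff (ore_mult P Q) n = (\<Sum>i\<le>degree P. if i \<le> n then f i else 0)"
    unfolding ore_mult_def coeff_sum coeff_monom inner by simp
  also have "\<dots> = (\<Sum>i\<le>max (degree P) n. if i \<le> n then f i else 0)"
    by (rule sum.mono_neutral_left) (auto simp: f_def coeff_eq_0)
  also have "\<dots> = (\<Sum>i\<le>n. f i)"
    by (rule sum.mono_neutral_cong_right) auto
  finally show ?thesis by (simp add: f_def)
qed

lemma degree_ore_mult_le: "degree (ore_mult P Q) \<le> degree P + degree Q"
proof (rule degree_le, intro allI impI)
  fix n assume n: "degree P + degree Q < n"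
  have "coeff P a * (ratshift ^^ a) (coeff Q (n - a)) = 0" for a
    using n by (cases "a \<le> degree P") (simp_all add: coeff_eq_0)
  then show "coeff (ore_mult P Q) n = 0"
    unfolding coeff_ore_mult by (intro sum.neutral) blast
qed

lemma coeff_ore_mult_degree:
  "coeff (ore_mult P Q) (degree P + degree Q) = lead_coeff P * (ratshift ^^ degree P) (lead_coeff Q)"
proof -
  let ?d = "degree P + degree Q"
  let ?t = "\<lambda>a. coeff P a * (ratshift ^^ a) (coeff Q (?d - a))"
  have "?t a = 0" if "a \<noteq> degree P" for a
    using that by (cases "a < degree P") (simp_all add: coeff_eq_0)
  then have "(\<Sum>a\<in>{..?d} - {degree P}. ?t a) = 0"
    by (intro sum.neutral) auto
  moreover have "(\<Sum>a\<le>?d. ?t a) = ?t (degree P) + (\<Sum>a\<in>{..?d} - {degree P}. ?t a)"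
    by (rule sum.remove) auto
  ultimately show ?thesis by (simp add: coeff_ore_mult)
qed

lemma ore_mult_neq_0:
  fixes P Q :: "'a::field_char_0 recop"
  assumes "P \<noteq> 0" and "Q \<noteq> 0"
  shows "ore_mult P Q \<noteq> 0"
  using coeff_ore_mult_degree[of P Q] assms by auto

lemma coeff_exp_part: "coeff (exp_part m r Q) k = (if k mod m = r then coeff Q k else 0)"
proof -
  have "coeff (exp_part m r Q) k
      = (\<Sum>j\<le>degree Q. if j = k then (if k mod m = r then coeff Q k else 0) else 0)"
    unfolding exp_part_def coeff_sum by (intro sum.cong) (auto simp: coeff_monom)
  then show ?thesis by (auto simp: coeff_eq_0)
qed

lemma mod_eq_nat_mod_iff_dvd:
  assumes "m > 0"
  shows "a mod m = nat (z mod int m) \<longleftrightarrow> int m dvd int a - z"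
proof -
  have "a mod m = nat (z mod int m) \<longleftrightarrow> int a mod int m = z mod int m"
    using assms by (metis nat_int of_nat_mod pos_mod_sign of_nat_0_less_iff int_nat_eq)
  also have "\<dots> \<longleftrightarrow> int m dvd int a - z" by (rule mod_eq_dvd_iff)
  finally show ?thesis .
qed

lemma residue_split_iff:
  assumes "m > 0" "k < m" "a \<le> n"
  shows "(a mod m = nat ((int i - int k) mod int m) \<and> (n - a) mod m = nat ((int k - int j) mod int m))
     \<longleftrightarrow> (k = nat ((int i - int a) mod int m) \<and> n mod m = nat ((int i - int j) mod int m))"
proof -
  have "k = nat ((int i - int a) mod int m) \<longleftrightarrow> k mod m = nat ((int i - int a) mod int m)"
    using assms(2) by simp
  moreover have "int (n - a) - (int k - int j) = (int n - (int i - int j)) - (int a - (int i - int k))"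
    using assms(3) by simp
  moreover have "int a - (int i - int k) = int k - (int i - int a)"
    by simp
  ultimately show ?thesis
    unfolding mod_eq_nat_mod_iff_dvd[OF assms(1)]
    by (metis dvd_diff_left_iff)
qed

lemma sum_ore_mult_exp_parts:
  assumes m: "m > 0"
  shows "(\<Sum>k<m. ore_mult (exp_part m (nat ((int i - int k) mod int m)) P)
                         (exp_part m (nat ((int k - int j) mod int m)) Q))
       = exp_part m (nat ((int i - int j) mod int m)) (ore_mult P Q)"
proof (rule poly_eqI)
  fix n
  define B where "B \<longleftrightarrow> n mod m = nat ((int i - int j) mod int m)"
  define g where "g a = coeff P a * (ratshift ^^ a) (coeff Q (n - a))" for a
  have summand: "coeff (exp_part m (nat ((int i - int k) mod int m)) P) a *
      (ratshift ^^ a) (coeff (exp_part m (nat ((int k - int j) mod int m)) Q) (n - a))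
    = (if k = nat ((int i - int a) mod int m) \<and> B then g a else 0)"
    if "k < m" "a \<le> n" for k a
  proof -
    have "coeff (exp_part m (nat ((int i - int k) mod int m)) P) a *
        (ratshift ^^ a) (coeff (exp_part m (nat ((int k - int j) mod int m)) Q) (n - a))
      = (if a mod m = nat ((int i - int k) mod int m) \<and> (n - a) mod m = nat ((int k - int j) mod int m)
         then g a else 0)"
      by (simp add: coeff_exp_part g_def)
    then show ?thesis by (simp only: residue_split_iff[OF m that] B_def)
  qed
  have "coeff (\<Sum>k<m. ore_mult (exp_part m (nat ((int i - int k) mod int m)) P)
                         (exp_part m (nat ((int k - int j) mod int m)) Q)) n
      = (\<Sum>k<m. \<Sum>a\<le>n. if k = nat ((int i - int a) mod int m) \<and> B then g a else 0)"
    unfolding coeff_sum coeff_ore_mult by (intro sum.cong refl) (simp add: summand)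
  also have "\<dots> = (\<Sum>a\<le>n. \<Sum>k<m. if k = nat ((int i - int a) mod int m) \<and> B then g a else 0)"
    by (rule sum.swap)
  also have "\<dots> = (\<Sum>a\<le>n. if B then g a else 0)"
    using m by (intro sum.cong refl) (simp add: sum.delta nat_less_iff)
  also have "\<dots> = coeff (exp_part m (nat ((int i - int j) mod int m)) (ore_mult P Q)) n"
    by (simp add: coeff_exp_part coeff_ore_mult B_def g_def)
  finally show "coeff (\<Sum>k<m. ore_mult (exp_part m (nat ((int i - int k) mod int m)) P)
                         (exp_part m (nat ((int k - int j) mod int m)) Q)) n
      = coeff (exp_part m (nat ((int i - int j) mod int m)) (ore_mult P Q)) n" .
qed

lemma exp_part_supported_on_multiples:
  assumes "supported_on_multiples m Q" and "r < m"
  shows "exp_part m r Q = (if r = 0 then Q else 0)"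
  using assms by (intro poly_eqI) (auto simp: coeff_exp_part supported_on_multiples_def)

lemma nat_mod_diff_eq_0_iff:
  assumes "i < m" "j < m"
  shows "nat ((int i - int j) mod int m) = 0 \<longleftrightarrow> i = j"
proof -
  have "nat ((int i - int j) mod int m) = 0 \<longleftrightarrow> int m dvd int j - int i"
    using mod_eq_nat_mod_iff_dvd[of m 0 "int i - int j"] assms by simp
  also have "\<dots> \<longleftrightarrow> int j mod int m = int i mod int m"
    by (rule mod_eq_dvd_iff[symmetric])
  finally show ?thesis using assms by auto
qed

lemma homogeneous_system_nontrivial_solution:
  fixes A :: "'e \<Rightarrow> 'v \<Rightarrow> 'f::field"
  assumes "finite E" and "finite V" and "card E < card V"
  shows "\<exists>x. (\<exists>v\<in>V. x v \<noteq> 0) \<and> (\<forall>e\<in>E. (\<Sum>v\<in>V. A e v * x v) = 0)"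
  using assms
proof (induction E arbitrary: V A rule: finite_induct)
  case empty
  then have "V \<noteq> {}" by auto
  then show ?case by (intro exI[of _ "\<lambda>_. 1"]) auto
next
  case (insert e E)
  show ?case
  proof (cases "\<forall>v\<in>V. A e v = 0")
    case True
    with insert.IH[of V A] insert.prems insert.hyps show ?thesis by auto
  next
    case False
    then obtain v0 where v0: "v0 \<in> V" "A e v0 \<noteq> 0" by auto
    define V' where "V' = V - {v0}"
    \<comment> \<open>Solve equation \<open>e\<close> for the pivot \<open>v0\<close> and substitute into the others.\<close>
    define A' where "A' e' v = A e' v - A e' v0 * A e v / A e v0" for e' v
    have "card E < card V'" using insert.prems insert.hyps v0 by (simp add: V'_def)
    with insert.IH[of V' A'] insert.prems(1) obtain x' where
      x': "\<exists>v\<in>V'. x' v \<noteq> 0" "\<forall>e'\<in>E. (\<Sum>v\<in>V'. A' e' v * x' v) = 0"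
      by (auto simp: V'_def)
    define x where "x = x'(v0 := - (\<Sum>v\<in>V'. A e v * x' v) / A e v0)"
    have split: "(\<Sum>v\<in>V. B v * x v) = B v0 * x v0 + (\<Sum>v\<in>V'. B v * x' v)" for B
      using v0 insert.prems unfolding V'_def x_def by (simp add: sum.remove)
    have "(\<Sum>v\<in>V. A e v * x v) = 0"
      unfolding split using v0 by (simp add: x_def)
    moreover have "(\<Sum>v\<in>V. A e' v * x v) = 0" if "e' \<in> E" for e'
    proof -
      have "(\<Sum>v\<in>V. A e' v * x v) = (\<Sum>v\<in>V'. A' e' v * x' v)"
        unfolding split using v0
        by (simp add: x_def A'_def algebra_simps sum_subtractf sum_divide_distrib sum_distrib_left)
      then show ?thesis using x' that by simp
    qed
    moreover have "\<exists>v\<in>V. x v \<noteq> 0"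
      using x'(1) by (auto simp: x_def V'_def)
    ultimately show ?thesis by auto
  qed
qed

lemma ex_left_multiple_supported_on_multiples:
  fixes L :: "'a::field_char_0 recop"
  assumes m: "m > 0"
  shows "\<exists>P. P \<noteq> 0 \<and> supported_on_multiples m (ore_mult P L)"
proof -
  define d where "d = degree L"
  define N where "N = m * d - d"
  have N: "N + d = m * d" using m by (simp add: N_def)
  \<comment> \<open>\<open>N + 1\<close> unknown coefficients of \<open>P\<close>, and one equation per exponent \<open>n \<le> m d\<close> not divisible
    by \<open>m\<close>; higher exponents of \<open>P L\<close> vanish for degree reasons.\<close>
  define E where "E = {n. n \<le> m * d \<and> \<not> m dvd n}"
  define A where "A n a = (if a \<le> n then (ratshift ^^ a) (coeff L (n - a)) else 0)" for n a
  have "E \<subseteq> {..m * d} - (\<lambda>q. m * q) ` {..d}" by (auto simp: E_def)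
  then have "card E \<le> card ({..m * d} - (\<lambda>q. m * q) ` {..d})" by (intro card_mono) auto
  also have "\<dots> = N"
    using m N by (subst card_Diff_subset) (auto simp: card_image inj_on_def)
  finally have "card E < card {..N}" by simp
  then obtain x where x: "\<exists>a\<in>{..N}. x a \<noteq> 0" "\<forall>n\<in>E. (\<Sum>a\<in>{..N}. A n a * x a) = 0"
    using homogeneous_system_nontrivial_solution[of E "{..N}" A] by (auto simp: E_def)
  define P where "P = (\<Sum>a\<le>N. monom (x a) a)"
  have coeff_P: "coeff P a = (if a \<le> N then x a else 0)" for a
    unfolding P_def coeff_sum coeff_monom by (simp add: sum.delta)
  have "P \<noteq> 0" using x(1) coeff_P by (metis atMost_iff coeff_0)
  have "degree P \<le> N" by (rule degree_le) (simp add: coeff_P)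
  have "coeff (ore_mult P L) n = 0" if "\<not> m dvd n" for n
  proof (cases "n \<le> m * d")
    case True
    have "coeff (ore_mult P L) n = (\<Sum>a\<in>{..n} \<inter> {..N}. x a * (ratshift ^^ a) (coeff L (n - a)))"
      unfolding coeff_ore_mult coeff_P sum.inter_restrict[OF finite_atMost] by (intro sum.cong) auto
    also have "\<dots> = (\<Sum>a\<le>N. A n a * x a)"
      unfolding Int_commute[of "{..n}"] sum.inter_restrict[OF finite_atMost] A_def
      by (intro sum.cong) auto
    also have "\<dots> = 0" using x(2) True that by (simp add: E_def)
    finally show ?thesis .
  next
    case False
    then have "degree (ore_mult P L) < n"
      using degree_ore_mult_le[of P L] \<open>degree P \<le> N\<close> N by (simp add: d_def)
    then show ?thesis by (rule coeff_eq_0)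
  qed
  with \<open>P \<noteq> 0\<close> show ?thesis unfolding supported_on_multiples_def by blast
qed

theorem proposition4p3:
  fixes L :: "'a::field_char_0 recop" and m :: nat
  assumes "m > 0" and "L \<noteq> 0"
  shows "\<exists>(M :: nat \<Rightarrow> nat \<Rightarrow> 'a recop) (T :: nat \<Rightarrow> 'a recop).
           (\<forall>i<m. T i \<noteq> 0) \<and>
           (\<forall>i<m. \<forall>j<m. (\<Sum>k<m. ore_mult (M i k) (sep_matrix m L k j))
                          = (if i = j then T i else 0))"
proof -
  obtain P where "P \<noteq> 0" and supported: "supported_on_multiples m (ore_mult P L)"
    using ex_left_multiple_supported_on_multiples[OF \<open>m > 0\<close>] by blast
  define M where "M i k = exp_part m (nat ((int i - int k) mod int m)) P" for i k
  have "(\<Sum>k<m. ore_mult (M i k) (sep_matrix m L k j)) = (if i = j then ore_mult P L else 0)"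
    if "i < m" "j < m" for i j
  proof -
    have "(\<Sum>k<m. ore_mult (M i k) (sep_matrix m L k j))
        = exp_part m (nat ((int i - int j) mod int m)) (ore_mult P L)"
      unfolding M_def sep_matrix_def by (rule sum_ore_mult_exp_parts[OF \<open>m > 0\<close>])
    also have "\<dots> = (if i = j then ore_mult P L else 0)"
      using exp_part_supported_on_multiples[OF supported] nat_mod_diff_eq_0_iff[OF that] \<open>m > 0\<close>
      by (simp add: nat_less_iff)
    finally show ?thesis .
  qed
  moreover have "ore_mult P L \<noteq> 0" using ore_mult_neq_0 \<open>P \<noteq> 0\<close> \<open>L \<noteq> 0\<close> by blast
  ultimately show ?thesis by (intro exI[of _ M] exI[of _ "\<lambda>_. ore_mult P L"]) auto
qed

end
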